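(* Every transformation $q\mapsto(aq+b)(cq+d)^{-1}$ induced by an invertible matrix $\begin{pmatrix}a&b\\c&d\end{pmatrix}$ with entries in the Hurwitz integers which satisfies the (BG) conditions belongs to the Hurwitz quaternionic modular group $PSL(2,\mathfrak H)$.
   Context: The Hurwitz integers are $\{a+b\mathbf i+c\mathbf j+d\mathbf k: a,b,c,d\in\mathbb Z\text{ or }a,b,c,d\in\mathbb Z+\tfrac12\}$. A quaternionic matrix $A$ satisfies the (BG) conditions if $\bar A^tKA=K$, $K=\begin{pmatrix}0&1\\1&0\end{pmatrix}$, equivalently $\Re(a\bar c)=0$, $\Re(b\bar d)=0$, $\bar bc+\bar da=1$. $PSL(2,\mathfrak H)$ is the group generated by $T(q)=q^{-1}$, the translations $q\mapsto q+\omega$ with $\omega\in\{b\mathbf i+c\mathbf j+d\mathbf k:b,c,d\in\mathbb Z\}$, and the maps $q\mapsto uqu^{-1}$ where $u$ ranges over the 24 Hurwitz units $\pm1,\pm\mathbf i,\pm\mathbf j,\pm\mathbf k,\frac12(\pm1\pm\mathbf i\pm\mathbf j\pm\mathbf k)$. *)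

theory Defs
  imports Main "HOL.Real"
begin

datatype quat = Quat (Re: real) (Im1: real) (Im2: real) (Im3: real)

instantiation quat :: "{zero, one, plus, minus, uminus, times, inverse}"
begin
definition "0 = Quat 0 0 0 0"
definition "1 = Quat 1 0 0 0"
definition "p + q = Quat (Re p + Re q) (Im1 p + Im1 q) (Im2 p + Im2 q) (Im3 p + Im3 q)"
definition "p - q = Quat (Re p - Re q) (Im1 p - Im1 q) (Im2 p - Im2 q) (Im3 p - Im3 q)"
definition "- q = Quat (- Re q) (- Im1 q) (- Im2 q) (- Im3 q)"
definition "p * q = Quat
   (Re p * Re q - Im1 p * Im1 q - Im2 p * Im2 q - Im3 p * Im3 q)
   (Re p * Im1 q + Im1 p * Re q + Im2 p * Im3 q - Im3 p * Im2 q)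
   (Re p * Im2 q - Im1 p * Im3 q + Im2 p * Re q + Im3 p * Im1 q)
   (Re p * Im3 q + Im1 p * Im2 q - Im2 p * Im1 q + Im3 p * Re q)"
definition "inverse q = (let n = (Re q)^2 + (Im1 q)^2 + (Im2 q)^2 + (Im3 q)^2 in
   Quat (Re q / n) (- Im1 q / n) (- Im2 q / n) (- Im3 q / n))"
definition "p div (q::quat) = p * inverse q"
instance ..
end

definition qcnj :: "quat \<Rightarrow> quat" where
  "qcnj q = Quat (Re q) (- Im1 q) (- Im2 q) (- Im3 q)"

definition hurwitz :: "quat set" where
  "hurwitz = {q. (Re q \<in> \<int> \<and> Im1 q \<in> \<int> \<and> Im2 q \<in> \<int> \<and> Im3 q \<in> \<int>) \<or>
                 (Re q - 1/2 \<in> \<int> \<and> Im1 q - 1/2 \<in> \<int> \<and> Im2 q - 1/2 \<in> \<int> \<and> Im3 q - 1/2 \<in> \<int>)}"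

definition hurwitz_units :: "quat set" where
  "hurwitz_units =
     {Quat s 0 0 0 | s. s \<in> {1, -1}} \<union> {Quat 0 s 0 0 | s. s \<in> {1, -1}} \<union>
     {Quat 0 0 s 0 | s. s \<in> {1, -1}} \<union> {Quat 0 0 0 s | s. s \<in> {1, -1}} \<union>
     {Quat a b c d | a b c d. a \<in> {1/2, -1/2} \<and> b \<in> {1/2, -1/2} \<and> c \<in> {1/2, -1/2} \<and> d \<in> {1/2, -1/2}}"

definition transl_vectors :: "quat set" where
  "transl_vectors = {Quat 0 b c d | b c d. b \<in> \<int> \<and> c \<in> \<int> \<and> d \<in> \<int>}"

text \<open>Extended quaternions: None is the point at infinity.\<close>
type_synonym equat = "quat option"

definition mobius :: "quat \<Rightarrow> quat \<Rightarrow> quat \<Rightarrow> quat \<Rightarrow> equat \<Rightarrow> equat" where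
  "mobius a b c d x = (case x of
      None \<Rightarrow> (if c = 0 then None else Some (a * inverse c))
    | Some q \<Rightarrow> (if c * q + d = 0 then None else Some ((a * q + b) * inverse (c * q + d))))"

definition T_map :: "equat \<Rightarrow> equat" where
  "T_map x = (case x of None \<Rightarrow> Some 0 | Some q \<Rightarrow> (if q = 0 then None else Some (inverse q)))"

definition transl_map :: "quat \<Rightarrow> equat \<Rightarrow> equat" where
  "transl_map w x = (case x of None \<Rightarrow> None | Some q \<Rightarrow> Some (q + w))"

definition conj_map :: "quat \<Rightarrow> equat \<Rightarrow> equat" where
  "conj_map u x = (case x of None \<Rightarrow> None | Some q \<Rightarrow> Some (u * q * inverse u))"

inductive_set PSL2H :: "(equat \<Rightarrow> equat) set" where
  gen_T: "T_map \<in> PSL2H"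
| gen_transl: "w \<in> transl_vectors \<Longrightarrow> transl_map w \<in> PSL2H"
| gen_conj: "u \<in> hurwitz_units \<Longrightarrow> conj_map u \<in> PSL2H"
| ident: "id \<in> PSL2H"
| comp: "f \<in> PSL2H \<Longrightarrow> g \<in> PSL2H \<Longrightarrow> f \<circ> g \<in> PSL2H"
| inverse: "f \<in> PSL2H \<Longrightarrow> inv f \<in> PSL2H"

definition qmat_invertible :: "quat \<Rightarrow> quat \<Rightarrow> quat \<Rightarrow> quat \<Rightarrow> bool" where
  "qmat_invertible a b c d \<longleftrightarrow> (\<exists>a' b' c' d'.
      a * a' + b * c' = 1 \<and> a * b' + b * d' = 0 \<and> c * a' + d * c' = 0 \<and> c * b' + d * d' = 1 \<and>
      a' * a + b' * c = 1 \<and> a' * b + b' * d = 0 \<and> c' * a + d' * c = 0 \<and> c' * b + d' * d = 1)"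

text \<open>(BG) conditions: conj(A)^t K A = K with K = [[0,1],[1,0]], written out entrywise.
  Here conj(A)^t = [[conj a, conj c],[conj b, conj d]] and K A = [[c,d],[a,b]].\<close>
definition BG :: "quat \<Rightarrow> quat \<Rightarrow> quat \<Rightarrow> quat \<Rightarrow> bool" where
  "BG a b c d \<longleftrightarrow>
     qcnj a * c + qcnj c * a = 0 \<and> qcnj a * d + qcnj c * b = 1 \<and>
     qcnj b * c + qcnj d * a = 1 \<and> qcnj b * d + qcnj d * b = 0"

end

theory Submission
  imports Defs
begin

text \<open>
  A Euclidean descent on the lower-left entry. Since \<open>Re (a c\<inverse>) = 0\<close> by (BG), a
  translation by an integral pure quaternion \<open>w\<close> brings \<open>a c\<inverse> + w\<close> into the cube
  \<open>|Im| \<le> 1/2\<close>, so \<open>a + w c\<close> has norm at most \<open>3/4 \<cdot> N c\<close>. Composing with \<open>T\<close> swaps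
  the rows of the matrix, and (BG) is invariant under both operations, so the norm of the
  lower-left entry strictly decreases; as \<open>4 N\<close> is an integer on Hurwitz integers, the
  descent reaches \<open>c = 0\<close>. Then (BG) forces \<open>d = a\<close> to be a unit and the map is a unit
  conjugation followed by a translation.
\<close>

subsection \<open>Quaternion arithmetic\<close>

lemma quat_eqI: "Re p = Re q \<Longrightarrow> Im1 p = Im1 q \<Longrightarrow> Im2 p = Im2 q \<Longrightarrow> Im3 p = Im3 q \<Longrightarrow> p = q"
  by (cases p; cases q) simp

lemma quat_components [simp]:
  "Re 0 = 0" "Im1 0 = 0" "Im2 0 = 0" "Im3 0 = 0"
  "Re 1 = 1" "Im1 1 = 0" "Im2 1 = 0" "Im3 1 = 0"
  "Re (p + q) = Re p + Re q" "Im1 (p + q) = Im1 p + Im1 q"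
  "Im2 (p + q) = Im2 p + Im2 q" "Im3 (p + q) = Im3 p + Im3 q"
  "Re (p - q) = Re p - Re q" "Im1 (p - q) = Im1 p - Im1 q"
  "Im2 (p - q) = Im2 p - Im2 q" "Im3 (p - q) = Im3 p - Im3 q"
  "Re (- q) = - Re q" "Im1 (- q) = - Im1 q" "Im2 (- q) = - Im2 q" "Im3 (- q) = - Im3 q"
  "Re (p * q) = Re p * Re q - Im1 p * Im1 q - Im2 p * Im2 q - Im3 p * Im3 q"
  "Im1 (p * q) = Re p * Im1 q + Im1 p * Re q + Im2 p * Im3 q - Im3 p * Im2 q"
  "Im2 (p * q) = Re p * Im2 q - Im1 p * Im3 q + Im2 p * Re q + Im3 p * Im1 q"
  "Im3 (p * q) = Re p * Im3 q + Im1 p * Im2 q - Im2 p * Im1 q + Im3 p * Re q"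
  "Re (qcnj q) = Re q" "Im1 (qcnj q) = - Im1 q" "Im2 (qcnj q) = - Im2 q" "Im3 (qcnj q) = - Im3 q"
  by (simp_all add: zero_quat_def one_quat_def plus_quat_def minus_quat_def uminus_quat_def
      times_quat_def qcnj_def)

definition qnorm :: "quat \<Rightarrow> real" where
  "qnorm q = (Re q)\<^sup>2 + (Im1 q)\<^sup>2 + (Im2 q)\<^sup>2 + (Im3 q)\<^sup>2"

lemma qnorm_nonneg: "0 \<le> qnorm q"
  by (simp add: qnorm_def)

lemma qnorm_eq_0_iff: "qnorm q = 0 \<longleftrightarrow> q = 0"
proof
  assume "qnorm q = 0"
  then have "Re q = 0 \<and> Im1 q = 0 \<and> Im2 q = 0 \<and> Im3 q = 0"
    unfolding qnorm_def by (smt (verit) zero_le_power2 power2_less_eq_zero_iff)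
  then show "q = 0" by (intro quat_eqI) auto
qed (simp add: qnorm_def)

lemma inverse_components:
  "Re (inverse q) = Re q / qnorm q" "Im1 (inverse q) = - Im1 q / qnorm q"
  "Im2 (inverse q) = - Im2 q / qnorm q" "Im3 (inverse q) = - Im3 q / qnorm q"
  by (simp_all add: inverse_quat_def qnorm_def Let_def)

lemma Re_mult_inverse: "Re (p * inverse q) = Re (qcnj p * q) / qnorm q"
  unfolding quat_components inverse_components by (simp add: add_divide_distrib diff_divide_distrib)

instance quat :: division_ring
proof
  fix a b c :: quat
  show "a + b + c = a + (b + c)" "a + b = b + a" "0 + a = a" "- a + a = 0" "a - b = a + - b"
    "1 * a = a" "a * 1 = a" by (rule quat_eqI; simp)+
  show "a * b * c = a * (b * c)" "(a + b) * c = a * c + b * c" "a * (b + c) = a * b + a * c"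
    by (rule quat_eqI; simp add: algebra_simps)+
  show "(0::quat) \<noteq> 1" by (metis quat_components(1,5) zero_neq_one)
  show "a / b = a * inverse b" by (simp add: divide_quat_def)
  show "inverse (0::quat) = 0" by (rule quat_eqI) (simp_all add: inverse_components qnorm_def)
next
  fix a :: quat
  assume "a \<noteq> 0"
  then have "qnorm a \<noteq> 0" by (simp add: qnorm_eq_0_iff)
  then have norm: "(Re a * Re a + Im1 a * Im1 a + Im2 a * Im2 a + Im3 a * Im3 a) / qnorm a = 1"
    by (simp add: qnorm_def power2_eq_square)
  show "inverse a * a = 1"
  proof (rule quat_eqI)
    show "Re (inverse a * a) = Re 1"
      using norm by (simp add: inverse_components add_divide_distrib diff_divide_distrib)
  qed (simp_all add: inverse_components field_simps)
  show "a * inverse a = 1"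
  proof (rule quat_eqI)
    show "Re (a * inverse a) = Re 1"
      using norm by (simp add: inverse_components add_divide_distrib diff_divide_distrib mult.commute)
  qed (simp_all add: inverse_components field_simps)
qed

lemma Re_mult_commute: "Re (p * q) = Re (q * p)"
  by (simp add: algebra_simps)

lemma qcnj_mult: "qcnj (p * q) = qcnj q * qcnj p"
  by (rule quat_eqI) (simp_all add: algebra_simps)

lemma qcnj_add: "qcnj (p + q) = qcnj p + qcnj q"
  by (rule quat_eqI) simp_all

lemma qcnj_0 [simp]: "qcnj 0 = 0"
  by (rule quat_eqI) simp_all

lemma qcnj_qcnj [simp]: "qcnj (qcnj q) = q"
  by (rule quat_eqI) simp_all

lemma qnorm_mult: "qnorm (p * q) = qnorm p * qnorm q"
  unfolding qnorm_def by (simp add: power2_eq_square algebra_simps)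

lemma qnorm_qcnj: "qnorm (qcnj q) = qnorm q"
  unfolding qnorm_def by simp

lemma qcnj_mult_self: "qnorm q = 1 \<Longrightarrow> qcnj q * q = 1"
  by (rule quat_eqI) (simp_all add: qnorm_def power2_eq_square algebra_simps)

subsection \<open>Hurwitz integers\<close>

definition lipschitz :: "quat set" where
  "lipschitz = {q. Re q \<in> \<int> \<and> Im1 q \<in> \<int> \<and> Im2 q \<in> \<int> \<and> Im3 q \<in> \<int>}"

definition half_unit :: quat where
  "half_unit = Quat (1/2) (1/2) (1/2) (1/2)"

lemma hurwitz_iff_lipschitz: "q \<in> hurwitz \<longleftrightarrow> q \<in> lipschitz \<or> q - half_unit \<in> lipschitz"
  by (simp add: hurwitz_def lipschitz_def half_unit_def)

lemma lipschitz_add: "p \<in> lipschitz \<Longrightarrow> q \<in> lipschitz \<Longrightarrow> p + q \<in> lipschitz"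
  by (simp add: lipschitz_def)

lemma lipschitz_mult: "p \<in> lipschitz \<Longrightarrow> q \<in> lipschitz \<Longrightarrow> p * q \<in> lipschitz"
  by (simp add: lipschitz_def)

lemma lipschitz_0: "0 \<in> lipschitz"
  by (simp add: lipschitz_def)

lemma lipschitzE:
  assumes "q \<in> lipschitz"
  obtains n0 n1 n2 n3 :: int where "q = Quat (of_int n0) (of_int n1) (of_int n2) (of_int n3)"
proof -
  from assms obtain n0 n1 n2 n3
    where "Re q = of_int n0" "Im1 q = of_int n1" "Im2 q = of_int n2" "Im3 q = of_int n3"
    unfolding lipschitz_def by (auto elim!: Ints_cases)
  then show ?thesis using that by (cases q) simp
qed

lemma hurwitz_add: "p \<in> hurwitz \<Longrightarrow> q \<in> hurwitz \<Longrightarrow> p + q \<in> hurwitz"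
  unfolding hurwitz_iff_lipschitz
proof (elim disjE)
  assume "p - half_unit \<in> lipschitz" "q - half_unit \<in> lipschitz"
  moreover have "half_unit + half_unit \<in> lipschitz"
    by (simp add: half_unit_def lipschitz_def)
  ultimately have "(p - half_unit) + (q - half_unit) + (half_unit + half_unit) \<in> lipschitz"
    using lipschitz_add by blast
  then show "p + q \<in> lipschitz \<or> p + q - half_unit \<in> lipschitz" by (simp add: algebra_simps)
qed (auto dest: lipschitz_add simp: algebra_simps)

lemma half_integral_in_hurwitz:
  fixes m0 m1 m2 m3 :: int
  assumes "even (m1 - m0)" "even (m2 - m0)" "even (m3 - m0)"
  shows "Quat (of_int m0 / 2) (of_int m1 / 2) (of_int m2 / 2) (of_int m3 / 2) \<in> hurwitz"
proof (cases "even m0")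
  case True
  then have "even m1" "even m2" "even m3" using assms by presburger+
  with True show ?thesis by (auto simp: hurwitz_def elim!: evenE)
next
  case False
  then have "odd m1" "odd m2" "odd m3" using assms by presburger+
  with False show ?thesis by (auto simp: hurwitz_def add_divide_distrib elim!: oddE)
qed

text \<open>Doubled, each coordinate of a product of \<open>half_unit\<close> with \<open>Quat n0 n1 n2 n3\<close> has the
  parity of \<open>n0 + n1 + n2 + n3\<close>.\<close>

lemma lipschitz_mult_half_unit: "x \<in> lipschitz \<Longrightarrow> x * half_unit \<in> hurwitz"
proof (elim lipschitzE)
  fix n0 n1 n2 n3 :: int
  assume x: "x = Quat (of_int n0) (of_int n1) (of_int n2) (of_int n3)"
  have "x * half_unit = Quat (of_int (n0 - n1 - n2 - n3) / 2) (of_int (n0 + n1 + n2 - n3) / 2)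
      (of_int (n0 - n1 + n2 + n3) / 2) (of_int (n0 + n1 - n2 + n3) / 2)"
    unfolding x half_unit_def by (rule quat_eqI) (simp_all add: field_simps)
  also have "\<dots> \<in> hurwitz" by (rule half_integral_in_hurwitz) presburger+
  finally show ?thesis .
qed

lemma half_unit_mult_lipschitz: "x \<in> lipschitz \<Longrightarrow> half_unit * x \<in> hurwitz"
proof (elim lipschitzE)
  fix n0 n1 n2 n3 :: int
  assume x: "x = Quat (of_int n0) (of_int n1) (of_int n2) (of_int n3)"
  have "half_unit * x = Quat (of_int (n0 - n1 - n2 - n3) / 2) (of_int (n0 + n1 - n2 + n3) / 2)
      (of_int (n0 + n1 + n2 - n3) / 2) (of_int (n0 - n1 + n2 + n3) / 2)"
    unfolding x half_unit_def by (rule quat_eqI) (simp_all add: field_simps)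
  also have "\<dots> \<in> hurwitz" by (rule half_integral_in_hurwitz) presburger+
  finally show ?thesis .
qed

lemma half_unit_mult_half_unit: "half_unit * half_unit \<in> hurwitz"
proof -
  have "half_unit * half_unit = Quat (of_int (- 1) / 2) (of_int 1 / 2) (of_int 1 / 2) (of_int 1 / 2)"
    unfolding half_unit_def by (rule quat_eqI) simp_all
  also have "\<dots> \<in> hurwitz" by (rule half_integral_in_hurwitz) presburger+
  finally show ?thesis .
qed

lemma hurwitz_mult:
  assumes "p \<in> hurwitz" "q \<in> hurwitz"
  shows "p * q \<in> hurwitz"
proof -
  obtain p' e where p: "p' \<in> lipschitz" "p = p' + e" "e = 0 \<or> e = half_unit"
    using assms(1) unfolding hurwitz_iff_lipschitz by (metis add.right_neutral diff_add_cancel)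
  obtain q' f where q: "q' \<in> lipschitz" "q = q' + f" "f = 0 \<or> f = half_unit"
    using assms(2) unfolding hurwitz_iff_lipschitz by (metis add.right_neutral diff_add_cancel)
  have "p * q = p' * q' + p' * f + e * q' + e * f"
    by (simp add: p q algebra_simps)
  moreover have "p' * q' \<in> hurwitz"
    using p q by (simp add: hurwitz_iff_lipschitz lipschitz_mult)
  moreover have "p' * f \<in> hurwitz" "e * q' \<in> hurwitz" "e * f \<in> hurwitz"
    using p q lipschitz_mult_half_unit half_unit_mult_lipschitz half_unit_mult_half_unit
    by (auto simp: hurwitz_iff_lipschitz lipschitz_0)
  ultimately show ?thesis by (simp add: hurwitz_add)
qed

lemma hurwitz_qcnj: "p \<in> hurwitz \<Longrightarrow> qcnj p \<in> hurwitz"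
proof -
  have "- x - 1/2 \<in> \<int>" if "x - 1/2 \<in> \<int>" for x :: real
  proof -
    have "- x - 1/2 = - (x - 1/2) - 1" by simp
    also have "\<dots> \<in> \<int>" by (rule Ints_diff[OF Ints_minus[OF that] Ints_1])
    finally show ?thesis .
  qed
  then show "p \<in> hurwitz \<Longrightarrow> qcnj p \<in> hurwitz" unfolding hurwitz_def by auto
qed

lemma transl_vectors_hurwitz: "w \<in> transl_vectors \<Longrightarrow> w \<in> hurwitz"
  unfolding transl_vectors_def hurwitz_def by auto

lemma transl_vectors_uminus: "w \<in> transl_vectors \<Longrightarrow> - w \<in> transl_vectors"
  unfolding transl_vectors_def by (auto simp: uminus_quat_def)

lemma qcnj_transl_vector: "w \<in> transl_vectors \<Longrightarrow> qcnj w = - w"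
  unfolding transl_vectors_def by (auto simp: uminus_quat_def qcnj_def)

lemma hurwitz_cases:
  assumes "q \<in> hurwitz"
  obtains (integral) n0 n1 n2 n3 :: int
    where "q = Quat (of_int n0) (of_int n1) (of_int n2) (of_int n3)"
  | (half) n0 n1 n2 n3 :: int
    where "q = Quat (of_int n0 + 1/2) (of_int n1 + 1/2) (of_int n2 + 1/2) (of_int n3 + 1/2)"
proof -
  consider "q \<in> lipschitz" | "q - half_unit \<in> lipschitz"
    using assms hurwitz_iff_lipschitz by blast
  then show ?thesis
  proof cases
    case 2
    then obtain n0 n1 n2 n3 :: int
      where "q - half_unit = Quat (of_int n0) (of_int n1) (of_int n2) (of_int n3)"
      by (elim lipschitzE)
    then have "q = Quat (of_int n0 + 1/2) (of_int n1 + 1/2) (of_int n2 + 1/2) (of_int n3 + 1/2)"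
      by (cases q) (simp add: half_unit_def minus_quat_def)
    then show ?thesis by (rule that(2))
  qed (elim lipschitzE, rule that(1))
qed

lemma four_qnorm_half_integral:
  fixes n0 n1 n2 n3 :: int
  shows "4 * qnorm (Quat (of_int n0 + 1/2) (of_int n1 + 1/2) (of_int n2 + 1/2) (of_int n3 + 1/2))
    = of_int ((2 * n0 + 1)\<^sup>2 + (2 * n1 + 1)\<^sup>2 + (2 * n2 + 1)\<^sup>2 + (2 * n3 + 1)\<^sup>2)"
  by (simp add: qnorm_def power2_eq_square field_simps)

lemma odd_square_ge_1: "1 \<le> (2 * n + 1)\<^sup>2" for n :: int
  by (simp add: power2_ge_1_iff) presburger

lemma four_qnorm_hurwitz_Ints: "q \<in> hurwitz \<Longrightarrow> 4 * qnorm q \<in> \<int>"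
  by (elim hurwitz_cases) (simp_all only: four_qnorm_half_integral, simp_all add: qnorm_def)

lemma qnorm_hurwitz_ge_1:
  assumes "q \<in> hurwitz" "q \<noteq> 0"
  shows "1 \<le> qnorm q"
  using assms(1)
proof (cases rule: hurwitz_cases)
  case (integral n0 n1 n2 n3)
  with assms(2) have "n0 \<noteq> 0 \<or> n1 \<noteq> 0 \<or> n2 \<noteq> 0 \<or> n3 \<noteq> 0"
    by (auto simp: zero_quat_def)
  then have "1 \<le> n0\<^sup>2 + n1\<^sup>2 + n2\<^sup>2 + n3\<^sup>2"
    by (smt (verit) power2_ge_1_iff zero_le_power2)
  then have "1 \<le> real_of_int (n0\<^sup>2 + n1\<^sup>2 + n2\<^sup>2 + n3\<^sup>2)" by linarith
  with integral show ?thesis by (simp add: qnorm_def)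
next
  case (half n0 n1 n2 n3)
  have "4 \<le> (2 * n0 + 1)\<^sup>2 + (2 * n1 + 1)\<^sup>2 + (2 * n2 + 1)\<^sup>2 + (2 * n3 + 1)\<^sup>2"
    using odd_square_ge_1[of n0] odd_square_ge_1[of n1] odd_square_ge_1[of n2] odd_square_ge_1[of n3]
    by linarith
  then have "4 \<le> 4 * qnorm q"
    unfolding half four_qnorm_half_integral by (metis of_int_le_iff of_int_numeral)
  then show ?thesis by simp
qed

lemma int_square_le_1: "n\<^sup>2 \<le> 1 \<Longrightarrow> n \<in> {-1, 0, 1}" for n :: int
  using abs_square_le_1[of n] by auto

lemma hurwitz_qnorm_1_imp_unit:
  assumes "q \<in> hurwitz" "qnorm q = 1"
  shows "q \<in> hurwitz_units"
  using assms(1)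
proof (cases rule: hurwitz_cases)
  case (integral n0 n1 n2 n3)
  with assms(2) have "real_of_int (n0\<^sup>2 + n1\<^sup>2 + n2\<^sup>2 + n3\<^sup>2) = 1"
    by (simp add: qnorm_def)
  then have sum: "n0\<^sup>2 + n1\<^sup>2 + n2\<^sup>2 + n3\<^sup>2 = 1"
    by (simp only: of_int_eq_1_iff)
  then have "n0\<^sup>2 \<le> 1" "n1\<^sup>2 \<le> 1" "n2\<^sup>2 \<le> 1" "n3\<^sup>2 \<le> 1"
    using zero_le_power2[of n0] zero_le_power2[of n1] zero_le_power2[of n2]
      zero_le_power2[of n3] by linarith+
  then have "n\<^sup>2 = \<bar>n\<bar>" if "n \<in> {n0, n1, n2, n3}" for n
    using that int_square_le_1 by fastforce
  with sum have "\<bar>n0\<bar> + \<bar>n1\<bar> + \<bar>n2\<bar> + \<bar>n3\<bar> = 1" by simp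
  then have "\<bar>n0\<bar> = 1 \<and> n1 = 0 \<and> n2 = 0 \<and> n3 = 0 \<or> n0 = 0 \<and> \<bar>n1\<bar> = 1 \<and> n2 = 0 \<and> n3 = 0 \<or>
      n0 = 0 \<and> n1 = 0 \<and> \<bar>n2\<bar> = 1 \<and> n3 = 0 \<or> n0 = 0 \<and> n1 = 0 \<and> n2 = 0 \<and> \<bar>n3\<bar> = 1"
    by (smt (verit))
  with integral show ?thesis
    unfolding hurwitz_units_def by (elim disjE conjE) (auto simp: abs_eq_iff)
next
  case (half n0 n1 n2 n3)
  have "real_of_int ((2 * n0 + 1)\<^sup>2 + (2 * n1 + 1)\<^sup>2 + (2 * n2 + 1)\<^sup>2 + (2 * n3 + 1)\<^sup>2)
      = 4 * qnorm q"
    unfolding half by (rule four_qnorm_half_integral[symmetric])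
  also have "\<dots> = 4" using assms(2) by simp
  finally have "(2 * n0 + 1)\<^sup>2 + (2 * n1 + 1)\<^sup>2 + (2 * n2 + 1)\<^sup>2 + (2 * n3 + 1)\<^sup>2 = 4"
    by (simp only: of_int_eq_numeral_iff)
  then have "(2 * n0 + 1)\<^sup>2 \<le> 1" "(2 * n1 + 1)\<^sup>2 \<le> 1" "(2 * n2 + 1)\<^sup>2 \<le> 1"
    "(2 * n3 + 1)\<^sup>2 \<le> 1"
    using odd_square_ge_1[of n0] odd_square_ge_1[of n1] odd_square_ge_1[of n2]
      odd_square_ge_1[of n3] by linarith+
  moreover have "of_int n + 1/2 \<in> {1/2, - 1/2 :: real}" if "(2 * n + 1)\<^sup>2 \<le> 1" for n
    using int_square_le_1[OF that] by auto
  ultimately show ?thesis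
    unfolding half hurwitz_units_def by (intro UnI2) blast
qed

lemma hurwitz_Re_0_imp_transl_vector:
  assumes "q \<in> hurwitz" "Re q = 0"
  shows "q \<in> transl_vectors"
  using assms(1)
proof (cases rule: hurwitz_cases)
  case (half n0 n1 n2 n3)
  with assms(2) have "real_of_int (2 * n0 + 1) = 0" by simp
  then have "2 * n0 + 1 = 0" by (simp only: of_int_eq_0_iff)
  then have False by presburger
  then show ?thesis ..
qed (use assms(2) in \<open>auto simp: transl_vectors_def\<close>)

lemma exists_transl_vector_qnorm_le:
  assumes "Re x = 0"
  shows "\<exists>w \<in> transl_vectors. qnorm (x + w) \<le> 3/4"
proof -
  define r :: "real \<Rightarrow> real" where "r y = of_int \<lfloor>y + 1/2\<rfloor>" for y
  have r: "(y - r y)\<^sup>2 \<le> 1/4" for y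
  proof -
    have "\<bar>y - r y\<bar> \<le> 1/2" unfolding r_def by linarith
    then have "\<bar>y - r y\<bar>\<^sup>2 \<le> (1/2)\<^sup>2" by (intro power_mono) auto
    then show ?thesis by (simp add: power2_eq_square)
  qed
  define w where "w = Quat 0 (- r (Im1 x)) (- r (Im2 x)) (- r (Im3 x))"
  have "w \<in> transl_vectors" unfolding w_def r_def transl_vectors_def by auto
  moreover have "qnorm (x + w) \<le> 3/4"
    using r[of "Im1 x"] r[of "Im2 x"] r[of "Im3 x"] assms unfolding qnorm_def w_def by simp
  ultimately show ?thesis by blast
qed

subsection \<open>The (BG) conditions\<close>

lemma BG_swap_rows: "BG a b c d \<Longrightarrow> BG c d a b"
  unfolding BG_def by (simp add: add.commute)

lemma BG_add_left_mult:
  assumes "w \<in> transl_vectors" and "BG a b c d"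
  shows "BG (a + w * c) (b + w * d) c d"
proof -
  have "qcnj (x + w * y) = qcnj x - qcnj y * w" for x y
    using qcnj_transl_vector[OF assms(1)] by (simp add: qcnj_add qcnj_mult)
  moreover have "(qcnj x - qcnj y * w) * z + qcnj y * (t + w * z) = qcnj x * z + qcnj y * t"
    for x y z t by (simp add: algebra_simps)
  ultimately show ?thesis
    using assms(2) unfolding BG_def by simp
qed

lemma BG_not_both_zero: "BG a b c d \<Longrightarrow> \<not> (a = 0 \<and> c = 0)"
  unfolding BG_def by auto

lemma BG_not_both_zero_at:
  assumes "BG a b c d"
  shows "\<not> (a * q + b = 0 \<and> c * q + d = 0)"
proof
  assume zero: "a * q + b = 0 \<and> c * q + d = 0"
  have "qcnj d * (a * q + b) + qcnj b * (c * q + d)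
      = (qcnj b * c + qcnj d * a) * q + (qcnj b * d + qcnj d * b)"
    by (simp add: algebra_simps)
  with zero assms have "q = 0" unfolding BG_def by simp
  with zero assms show False unfolding BG_def by simp
qed

lemma BG_Re_mult_inverse: "BG a b c d \<Longrightarrow> Re (a * inverse c) = 0"
  unfolding BG_def Re_mult_inverse by (auto dest!: arg_cong[where f = Re] simp: algebra_simps)

lemma BG_lower_triangular_unit:
  assumes "a \<in> hurwitz" "d \<in> hurwitz" "BG a b 0 d"
  shows "qnorm a = 1" "d = a"
proof -
  from assms(3) have ad: "qcnj a * d = 1" unfolding BG_def by simp
  then have "a \<noteq> 0" "d \<noteq> 0" by auto
  then have "1 \<le> qnorm a" "1 \<le> qnorm d"
    using assms(1,2) by (simp_all add: qnorm_hurwitz_ge_1)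
  have "qnorm a * qnorm d = qnorm (qcnj a * d)"
    by (simp add: qnorm_mult qnorm_qcnj)
  also have "\<dots> = 1"
    using ad by (simp add: qnorm_def)
  finally have "qnorm a * qnorm d = 1" .
  moreover have "qnorm a \<le> qnorm a * qnorm d"
    using \<open>1 \<le> qnorm a\<close> \<open>1 \<le> qnorm d\<close> by (simp add: mult_le_cancel_left1)
  ultimately show "qnorm a = 1"
    using \<open>1 \<le> qnorm a\<close> by linarith
  then have "qcnj a * a = 1" by (rule qcnj_mult_self)
  then show "d = a"
    using inverse_unique[OF ad] inverse_unique[of "qcnj a" a] by simp
qed

subsection \<open>Moebius maps\<close>

lemma add_mult_mult_inverse: "y \<noteq> 0 \<Longrightarrow> (x + w * y) * inverse y = x * inverse y + w"
  for x y w :: "'a :: division_ring"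
  by (simp add: distrib_right mult.assoc)

lemma mobius_eq_transl_comp: "mobius a b c d = transl_map (- w) \<circ> mobius (a + w * c) (b + w * d) c d"
proof
  fix x
  show "mobius a b c d x = (transl_map (- w) \<circ> mobius (a + w * c) (b + w * d) c d) x"
  proof (cases x)
    case None
    then show ?thesis
      using add_mult_mult_inverse[of c a w] by (simp add: mobius_def transl_map_def)
  next
    case (Some q)
    have key: "(a + w * c) * q + (b + w * d) = a * q + b + w * (c * q + d)"
      by (simp add: algebra_simps)
    show ?thesis
    proof (cases "c * q + d = 0")
      case False
      then have "(a * q + b + w * (c * q + d)) * inverse (c * q + d) + - w
          = (a * q + b) * inverse (c * q + d)"
        by (simp add: add_mult_mult_inverse)
      with False show ?thesis by (simp add: Some mobius_def transl_map_def key)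
    qed (simp add: Some mobius_def transl_map_def)
  qed
qed

lemma T_map_quotient:
  fixes u v :: quat
  assumes "\<not> (u = 0 \<and> v = 0)"
  shows "T_map (if u = 0 then None else Some (v * inverse u))
    = (if v = 0 then None else Some (u * inverse v))"
  using assms by (simp add: T_map_def nonzero_inverse_mult_distrib)

lemma T_map_comp_mobius: "BG a b c d \<Longrightarrow> T_map \<circ> mobius c d a b = mobius a b c d"
proof
  fix x
  assume "BG a b c d"
  then show "(T_map \<circ> mobius c d a b) x = mobius a b c d x"
    using BG_not_both_zero BG_not_both_zero_at
    by (cases x) (simp_all add: mobius_def T_map_quotient)
qed

lemma mobius_eq_conj_map: "u \<noteq> 0 \<Longrightarrow> mobius u 0 0 u = conj_map u"
  by (auto simp: mobius_def conj_map_def split: option.split)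

lemma mobius_lower_triangular_in_PSL2H:
  assumes "a \<in> hurwitz" "b \<in> hurwitz" "d \<in> hurwitz" "BG a b 0 d"
  shows "mobius a b 0 d \<in> PSL2H"
proof -
  have unit: "qnorm a = 1" and "d = a"
    using BG_lower_triangular_unit assms(1,3,4) by blast+
  define w where "w = b * qcnj a"
  have "w \<in> hurwitz"
    unfolding w_def using assms by (simp add: hurwitz_mult hurwitz_qcnj)
  moreover have "Re w = 0"
  proof -
    have "Re (qcnj b * a) + Re (qcnj a * b) = 0"
      using assms(4) unfolding BG_def \<open>d = a\<close> by (metis quat_components(1,9))
    moreover have "Re (qcnj b * a) = Re (qcnj a * b)"
      by (simp add: algebra_simps)
    moreover have "Re w = Re (qcnj a * b)"
      unfolding w_def by (rule Re_mult_commute)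
    ultimately show ?thesis by linarith
  qed
  ultimately have "w \<in> transl_vectors"
    by (rule hurwitz_Re_0_imp_transl_vector)
  have "b + - w * a = 0"
    unfolding w_def using qcnj_mult_self[OF unit] by (simp add: mult.assoc)
  moreover have "a \<noteq> 0" using unit by (auto simp: qnorm_def)
  ultimately have "mobius a b 0 d = transl_map w \<circ> conj_map a"
    using mobius_eq_transl_comp[of a b 0 a "- w"] mobius_eq_conj_map \<open>d = a\<close> by simp
  also have "\<dots> \<in> PSL2H"
    using \<open>w \<in> transl_vectors\<close> hurwitz_qnorm_1_imp_unit[OF assms(1) unit]
    by (intro PSL2H.comp PSL2H.gen_transl PSL2H.gen_conj)
  finally show ?thesis .
qed

subsection \<open>Euclidean descent\<close>

lemma BG_exists_transl_qnorm_less: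
  assumes "BG a b c d" "c \<noteq> 0"
  shows "\<exists>w \<in> transl_vectors. qnorm (a + w * c) < qnorm c"
proof -
  obtain w where w: "w \<in> transl_vectors" "qnorm (a * inverse c + w) \<le> 3/4"
    using exists_transl_vector_qnorm_le[OF BG_Re_mult_inverse[OF assms(1)]] by blast
  have "a + w * c = (a * inverse c + w) * c"
    using assms(2) by (simp add: distrib_right mult.assoc)
  then have "qnorm (a + w * c) = qnorm (a * inverse c + w) * qnorm c"
    by (simp add: qnorm_mult)
  also have "\<dots> \<le> 3/4 * qnorm c"
    using w(2) qnorm_nonneg by (rule mult_right_mono)
  also have "\<dots> < qnorm c"
    using assms(2) qnorm_nonneg[of c] qnorm_eq_0_iff[of c] by simp
  finally show ?thesis using w(1) by blast
qed

lemma hurwitz_qnorm_less_imp_floor_less: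
  assumes "p \<in> hurwitz" "q \<in> hurwitz" "qnorm p < qnorm q"
  shows "nat \<lfloor>4 * qnorm p\<rfloor> < nat \<lfloor>4 * qnorm q\<rfloor>"
proof -
  obtain k l where "4 * qnorm p = of_int k" "4 * qnorm q = of_int l"
    using four_qnorm_hurwitz_Ints assms(1,2) by (metis Ints_cases)
  with assms(3) qnorm_nonneg[of p] show ?thesis by simp
qed

lemma BG_hurwitz_mobius_in_PSL2H:
  assumes "a \<in> hurwitz" "b \<in> hurwitz" "c \<in> hurwitz" "d \<in> hurwitz" "BG a b c d"
  shows "mobius a b c d \<in> PSL2H"
  using assms
proof (induction "nat \<lfloor>4 * qnorm c\<rfloor>" arbitrary: a b c d rule: less_induct)
  case less
  show ?case
  proof (cases "c = 0")
    case True
    with less.prems show ?thesis by (simp add: mobius_lower_triangular_in_PSL2H)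
  next
    case False
    with less.prems obtain w where w: "w \<in> transl_vectors" "qnorm (a + w * c) < qnorm c"
      using BG_exists_transl_qnorm_less by blast
    define a' b' where "a' = a + w * c" and "b' = b + w * d"
    have "a' \<in> hurwitz" "b' \<in> hurwitz"
      unfolding a'_def b'_def using less.prems w(1)
      by (simp_all add: hurwitz_add hurwitz_mult transl_vectors_hurwitz)
    moreover have "BG a' b' c d"
      unfolding a'_def b'_def using w(1) less.prems(5) by (rule BG_add_left_mult)
    moreover have "nat \<lfloor>4 * qnorm a'\<rfloor> < nat \<lfloor>4 * qnorm c\<rfloor>"
      using \<open>a' \<in> hurwitz\<close> less.prems(3) w(2) unfolding a'_def
      by (rule hurwitz_qnorm_less_imp_floor_less)
    ultimately have "mobius c d a' b' \<in> PSL2H"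
      using less.hyps less.prems by (blast intro: BG_swap_rows)
    moreover have "mobius a b c d = transl_map (- w) \<circ> (T_map \<circ> mobius c d a' b')"
      unfolding a'_def b'_def T_map_comp_mobius[OF \<open>BG a' b' c d\<close>[unfolded a'_def b'_def]]
      by (rule mobius_eq_transl_comp)
    ultimately show ?thesis
      using transl_vectors_uminus[OF w(1)] by (simp add: PSL2H.comp PSL2H.gen_T PSL2H.gen_transl)
  qed
qed

theorem mainTheorem11:
  assumes "a \<in> hurwitz" "b \<in> hurwitz" "c \<in> hurwitz" "d \<in> hurwitz"
    and "qmat_invertible a b c d"
    and "BG a b c d"
  shows "mobius a b c d \<in> PSL2H"
  using assms(1-4,6) by (rule BG_hurwitz_mobius_in_PSL2H)

end
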